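(* Let $(M,g)$ be a semi-Riemannian manifold with Levi-Civita connection $\overset{\circ}{\nabla}$ and let $\pi$ be a one-form on $M$. Define the $(1,2)$-tensor field $$U(\omega,X,Y)=\frac12\left(X^\flat\big(\pi(\omega^\sharp)Y-\pi(Y)\omega^\sharp\big)+Y^\flat\big(\pi(\omega^\sharp)X-\pi(X)\omega^\sharp\big)\right)$$ and $\nabla_XY=\overset{\circ}{\nabla}_XY+U(-,X,Y)$. Then $(\nabla,U)$ is a Schrödinger connection (called the Yano-Schrödinger connection).
   Context: $X^\flat=g(X,-)$ (so $X^\flat(V)=g(X,V)$), $\omega^\sharp=g^{-1}(\omega,-)$. For a $(1,2)$-tensor field $U$, $U(-,X,Y)$ denotes the vector field with $\omega(U(-,X,Y))=U(\omega,X,Y)$. A Schrödinger connection is an affine connection $\nabla_XY=\overset{\circ}{\nabla}_XY+U(-,X,Y)$ where $U$ satisfies, for all vector fields $X,Y$ and one-forms $\omega$: (a) $U(\omega,X,Y)=U(\omega,Y,X)$, and (b) $U(\omega,X,Y)+U(\omega,Y,X)+U(X^\flat,\omega^\sharp,Y)+U(X^\flat,Y,\omega^\sharp)+U(Y^\flat,\omega^\sharp,X)+U(Y^\flat,X,\omega^\sharp)=0$. *)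

theory Defs
  imports "HOL-Analysis.Analysis"
begin

text \<open>Pointwise (tangent-space) model.  At a point, the tangent space is
  real^'n, a one-form is a covector also represented in real^'n with pairing
  omega(V) = omega \<bullet> V.  The metric at the point is a symmetric invertible
  (nondegenerate, any signature) matrix G with g(X,Y) = X \<bullet> (G *v Y).\<close>

definition metric_at :: "real^'n^'n \<Rightarrow> bool" where
  "metric_at G \<longleftrightarrow> transpose G = G \<and> invertible G"

definition gmet :: "real^'n^'n \<Rightarrow> real^'n \<Rightarrow> real^'n \<Rightarrow> real" where
  "gmet G X Y = X \<bullet> (G *v Y)"

definition flat :: "real^'n^'n \<Rightarrow> real^'n \<Rightarrow> real^'n" where
  "flat G X = transpose G *v X"

definition sharp :: "real^'n^'n \<Rightarrow> real^'n \<Rightarrow> real^'n" where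
  "sharp G \<omega> = matrix_inv G *v \<omega>"

definition tensor12 :: "(real^'n \<Rightarrow> real^'n \<Rightarrow> real^'n \<Rightarrow> real) \<Rightarrow> bool" where
  "tensor12 U \<longleftrightarrow>
     (\<forall>X Y. linear (\<lambda>\<omega>. U \<omega> X Y)) \<and>
     (\<forall>\<omega> Y. linear (\<lambda>X. U \<omega> X Y)) \<and>
     (\<forall>\<omega> X. linear (\<lambda>Y. U \<omega> X Y))"

definition schroedinger_tensor ::
  "real^'n^'n \<Rightarrow> (real^'n \<Rightarrow> real^'n \<Rightarrow> real^'n \<Rightarrow> real) \<Rightarrow> bool" where
  "schroedinger_tensor G U \<longleftrightarrow>
     tensor12 U \<and>
     (\<forall>\<omega> X Y. U \<omega> X Y = U \<omega> Y X) \<and>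
     (\<forall>\<omega> X Y. U \<omega> X Y + U \<omega> Y X
        + U (flat G X) (sharp G \<omega>) Y + U (flat G X) Y (sharp G \<omega>)
        + U (flat G Y) (sharp G \<omega>) X + U (flat G Y) X (sharp G \<omega>) = 0)"

definition yano_U :: "real^'n^'n \<Rightarrow> real^'n \<Rightarrow> real^'n \<Rightarrow> real^'n \<Rightarrow> real^'n \<Rightarrow> real" where
  "yano_U G \<pi> \<omega> X Y =
     (1/2) * ( flat G X \<bullet> ((\<pi> \<bullet> sharp G \<omega>) *\<^sub>R Y - (\<pi> \<bullet> Y) *\<^sub>R sharp G \<omega>)
             + flat G Y \<bullet> ((\<pi> \<bullet> sharp G \<omega>) *\<^sub>R X - (\<pi> \<bullet> X) *\<^sub>R sharp G \<omega>))"

end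

theory Submission
  imports Defs
begin

text \<open>Musical duality, \<open>X\<^sup>\<flat>(\<omega>\<^sup>\<sharp>) = \<omega>(X)\<close> and \<open>(X\<^sup>\<flat>)\<^sup>\<sharp> = X\<close>, brings the tensor to the closed form
  \<open>U(\<omega>,X,Y) = \<pi>(\<omega>\<^sup>\<sharp>) g(X,Y) - (\<omega>(X) \<pi>(Y) + \<omega>(Y) \<pi>(X))/2\<close>.
  Linearity and symmetry in \<open>X, Y\<close> are visible already in the definition; in condition (b) the
  two symmetric terms contribute \<open>2\<pi>(\<omega>\<^sup>\<sharp>) g(X,Y)\<close>, the four terms with a flat first argument
  contribute \<open>-2\<pi>(\<omega>\<^sup>\<sharp>) g(X,Y)\<close>, and the products \<open>\<omega>(X) \<pi>(Y)\<close>, \<open>\<omega>(Y) \<pi>(X)\<close> cancel as well.\<close>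

lemma matrix_inv_right:
  fixes A :: "real^'n^'n"
  assumes "invertible A" shows "A ** matrix_inv A = mat 1"
  using assms unfolding invertible_def matrix_inv_def by (rule someI2_ex) auto

lemma matrix_inv_left:
  fixes A :: "real^'n^'n"
  assumes "invertible A" shows "matrix_inv A ** A = mat 1"
  using assms unfolding invertible_def matrix_inv_def by (rule someI2_ex) auto

lemma linear_flat: "linear (flat G)"
  unfolding flat_def by (rule matrix_vector_mul_linear)

lemma linear_sharp: "linear (sharp G)"
  unfolding sharp_def by (rule matrix_vector_mul_linear)

lemma flat_inner: "flat G X \<bullet> Y = gmet G X Y"
  unfolding flat_def gmet_def by (simp add: dot_lmul_matrix)

lemma gmet_commute:
  assumes "metric_at G" shows "gmet G X Y = gmet G Y X"
proof -
  have "gmet G X Y = (transpose G *v X) \<bullet> Y"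
    by (simp add: flat_inner[symmetric] flat_def del: transpose_matrix_vector)
  also have "\<dots> = gmet G Y X"
    using assms by (simp add: metric_at_def gmet_def inner_commute del: transpose_matrix_vector)
  finally show ?thesis .
qed

lemma flat_inner_sharp:
  assumes "metric_at G" shows "flat G X \<bullet> sharp G \<omega> = X \<bullet> \<omega>"
  using assms matrix_inv_right[of G]
  by (simp add: flat_inner gmet_def sharp_def metric_at_def matrix_vector_mul_assoc)

lemma sharp_flat:
  assumes "metric_at G" shows "sharp G (flat G X) = X"
  using assms matrix_inv_left[of G]
  by (simp add: flat_def sharp_def metric_at_def matrix_vector_mul_assoc
      del: transpose_matrix_vector)

lemma yano_U_eq:
  assumes "metric_at G"
  shows "yano_U G \<pi> \<omega> X Y = (\<pi> \<bullet> sharp G \<omega>) * gmet G X Y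
           - ((X \<bullet> \<omega>) * (\<pi> \<bullet> Y) + (Y \<bullet> \<omega>) * (\<pi> \<bullet> X)) / 2"
  using flat_inner_sharp[OF assms] gmet_commute[OF assms, of X Y]
  by (simp add: yano_U_def flat_inner inner_diff_right algebra_simps)

lemma tensor12_yano_U: "tensor12 (yano_U G \<pi>)"
proof -
  interpret flat: linear "flat G" by (rule linear_flat)
  interpret sharp: linear "sharp G" by (rule linear_sharp)
  show ?thesis
    unfolding tensor12_def yano_U_def
    by (intro conjI allI linearI)
      (simp_all add: flat.add flat.scale sharp.add sharp.scale inner_add_left inner_add_right
        scaleR_add_left algebra_simps)
qed

lemma yano_U_commute: "yano_U G \<pi> \<omega> X Y = yano_U G \<pi> \<omega> Y X"
  unfolding yano_U_def by simp

lemma yano_U_schroedinger_sum: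
  assumes "metric_at G"
  shows "yano_U G \<pi> \<omega> X Y + yano_U G \<pi> \<omega> Y X
    + yano_U G \<pi> (flat G X) (sharp G \<omega>) Y + yano_U G \<pi> (flat G X) Y (sharp G \<omega>)
    + yano_U G \<pi> (flat G Y) (sharp G \<omega>) X + yano_U G \<pi> (flat G Y) X (sharp G \<omega>) = 0"
proof -
  have "Z \<bullet> flat G W = gmet G W Z" for Z W
    by (metis inner_commute flat_inner)
  moreover have "gmet G (sharp G \<omega>) Z = Z \<bullet> \<omega>" for Z
    using flat_inner_sharp[OF assms, of Z \<omega>] gmet_commute[OF assms]
    by (simp add: flat_inner)
  ultimately show ?thesis
    using gmet_commute[OF assms, of X Y]
    by (simp add: yano_U_eq[OF assms] sharp_flat[OF assms] algebra_simps)
qed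

lemma schroedinger_tensor_yano_U:
  assumes "metric_at G" shows "schroedinger_tensor G (yano_U G \<pi>)"
  unfolding schroedinger_tensor_def
  using tensor12_yano_U yano_U_commute yano_U_schroedinger_sum[OF assms] by blast

theorem mainTheorem6:
  fixes g :: "'m \<Rightarrow> real^'n^'n" and \<pi> :: "'m \<Rightarrow> real^'n"
  assumes "\<forall>p. metric_at (g p)"
  shows "\<forall>p. schroedinger_tensor (g p) (yano_U (g p) (\<pi> p))"
  using assms by (simp add: schroedinger_tensor_yano_U)

end
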